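(* For all integers $m\ge n\ge 2$, $$\gamma^{SLD}(K_n\times K_m)=\begin{cases} m+n-1, & n>2,\\ m, & n=2,\ m>2,\\ 4, & n=m=2.\end{cases}$$
   Context: $K_q$ is the complete graph on vertex set $\{1,\dots,q\}$. The direct product $G_1\times G_2$ has vertex set $V_1\times V_2$, with $(u_1,u_2)$ adjacent to $(v_1,v_2)$ iff $u_1v_1\in E_1$ and $u_2v_2\in E_2$. For a code (nonempty vertex subset) $C$ and vertex $v$, $I(C;v)=N[v]\cap C$, where $N[v]$ is the closed neighbourhood. A code $C$ in a graph $G$ is self-locating-dominating if for every non-codeword $u$, $I(C;u)\ne\emptyset$ and $\bigcap_{c\in I(C;u)}N[c]=\{u\}$. $\gamma^{SLD}(G)$ is the minimum size of a self-locating-dominating code in the finite graph $G$. *)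

theory Defs
  imports Main
begin

text \<open>A finite graph is given by a vertex set V and an adjacency relation E
  (assumed symmetric and irreflexive for the graphs considered).\<close>

definition complete_verts :: "nat \<Rightarrow> nat set" where
  "complete_verts q = {1..q}"

definition complete_adj :: "nat \<Rightarrow> nat \<Rightarrow> bool" where
  "complete_adj u v \<longleftrightarrow> u \<noteq> v"

definition dprod_adj :: "('a \<Rightarrow> 'a \<Rightarrow> bool) \<Rightarrow> ('b \<Rightarrow> 'b \<Rightarrow> bool)
    \<Rightarrow> 'a \<times> 'b \<Rightarrow> 'a \<times> 'b \<Rightarrow> bool" where
  "dprod_adj E1 E2 x y \<longleftrightarrow> E1 (fst x) (fst y) \<and> E2 (snd x) (snd y)"

definition cnbhd :: "'a set \<Rightarrow> ('a \<Rightarrow> 'a \<Rightarrow> bool) \<Rightarrow> 'a \<Rightarrow> 'a set" where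
  "cnbhd V E v = {u \<in> V. u = v \<or> E v u}"

definition Iset :: "'a set \<Rightarrow> ('a \<Rightarrow> 'a \<Rightarrow> bool) \<Rightarrow> 'a set \<Rightarrow> 'a \<Rightarrow> 'a set" where
  "Iset V E C v = cnbhd V E v \<inter> C"

definition is_SLD :: "'a set \<Rightarrow> ('a \<Rightarrow> 'a \<Rightarrow> bool) \<Rightarrow> 'a set \<Rightarrow> bool" where
  "is_SLD V E C \<longleftrightarrow> C \<subseteq> V \<and> C \<noteq> {} \<and>
     (\<forall>u \<in> V - C. Iset V E C u \<noteq> {} \<and>
        (\<Inter>c \<in> Iset V E C u. cnbhd V E c) = {u})"

definition gamma_SLD :: "'a set \<Rightarrow> ('a \<Rightarrow> 'a \<Rightarrow> bool) \<Rightarrow> nat" where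
  "gamma_SLD V E = Min (card ` {C. is_SLD V E C})"

end

(* In K_n x K_m two distinct vertices are adjacent iff they differ in both coordinates; call
   (a, b) the vertex in row a and column b. A codeword in N[u] other than u shares no line
   with u, and its closed neighbourhood omits exactly the other vertices of its row and
   column. So C is self-locating-dominating iff for every non-codeword u and every vertex
   v /= u some codeword off the lines of u lies on a line through v without being v.
   Taking v on a line of u shows that every other row and every other column contains a
   codeword. Hence an empty row forces all other rows to be full, an empty column forces
   all other columns to be full, and a column whose only codeword is (k, l) forces row k to
   be full; otherwise every column holds two codewords. Counting in these cases gives
   |C| >= m + n - 1, or |C| >= m when n = 2. The first row together with the first column
   attains the bound, and for n = 2 the first row alone does. K_2 x K_2 is a perfect
   matching: the only candidate codeword in N[u] is the partner w of u, and N[w] = N[u],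
   so every vertex must be a codeword. *)

theory Submission
  imports Defs
begin

lemma is_SLD_iff_separating:
  assumes "symp E"
  shows "is_SLD V E C \<longleftrightarrow> C \<subseteq> V \<and> C \<noteq> {} \<and>
    (\<forall>u \<in> V - C. \<forall>v \<in> V - {u}. \<exists>c \<in> Iset V E C u. v \<notin> cnbhd V E c)"
    (is "_ \<longleftrightarrow> ?separating")
proof
  assume S: "is_SLD V E C"
  have "\<exists>c \<in> Iset V E C u. v \<notin> cnbhd V E c" if "u \<in> V - C" "v \<in> V - {u}" for u v
  proof -
    have "(\<Inter>c \<in> Iset V E C u. cnbhd V E c) = {u}" using S that(1) by (simp add: is_SLD_def)
    then show ?thesis using that(2) by blast
  qed
  with S show ?separating
    by (simp add: is_SLD_def)
next
  assume sep: ?separating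
  show "is_SLD V E C"
    unfolding is_SLD_def
  proof (intro conjI ballI)
    show "C \<subseteq> V" "C \<noteq> {}" using sep by blast+
    fix u assume u: "u \<in> V - C"
    \<comment> \<open>Domination is not an extra condition: any codeword is a vertex to be separated from u.\<close>
    obtain c where "c \<in> C" using sep by blast
    then have "c \<in> V - {u}" using sep u by blast
    then show nonempty: "Iset V E C u \<noteq> {}" using sep u by blast
    have "u \<in> cnbhd V E c" if "c \<in> Iset V E C u" for c
      using that u assms by (auto simp: Iset_def cnbhd_def symp_def)
    moreover have "v = u" if v: "v \<in> (\<Inter>c \<in> Iset V E C u. cnbhd V E c)" for v
    proof (rule ccontr)
      assume "v \<noteq> u"
      moreover have "v \<in> V" using v nonempty by (auto simp: cnbhd_def)
      ultimately obtain c where "c \<in> Iset V E C u" "v \<notin> cnbhd V E c" using sep u by blast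
      with v show False by blast
    qed
    ultimately show "(\<Inter>c \<in> Iset V E C u. cnbhd V E c) = {u}" by blast
  qed
qed

lemma is_SLD_whole: "V \<noteq> {} \<Longrightarrow> is_SLD V E V"
  by (simp add: is_SLD_def)

lemma gamma_SLD_eqI:
  assumes "finite V" "is_SLD V E C" "card C = k"
    and "\<And>C'. is_SLD V E C' \<Longrightarrow> k \<le> card C'"
  shows "gamma_SLD V E = k"
  unfolding gamma_SLD_def
proof (rule Min_eqI)
  have "card ` {C. is_SLD V E C} \<subseteq> {..card V}"
    using assms(1) by (auto simp: is_SLD_def intro: card_mono)
  then show "finite (card ` {C. is_SLD V E C})"
    using finite_subset by blast
  show "k \<in> card ` {C. is_SLD V E C}" using assms(2,3) by blast
  show "k \<le> j" if "j \<in> card ` {C. is_SLD V E C}" for j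
    using that assms(4) by blast
qed

abbreviation kprod_verts :: "nat \<Rightarrow> nat \<Rightarrow> (nat \<times> nat) set" where
  "kprod_verts n m \<equiv> complete_verts n \<times> complete_verts m"

abbreviation kprod_adj :: "nat \<times> nat \<Rightarrow> nat \<times> nat \<Rightarrow> bool" where
  "kprod_adj \<equiv> dprod_adj complete_adj complete_adj"

lemma mem_cnbhd_kprod:
  "v \<in> cnbhd V kprod_adj c \<longleftrightarrow> v \<in> V \<and> (v = c \<or> fst c \<noteq> fst v \<and> snd c \<noteq> snd v)"
  by (auto simp: cnbhd_def dprod_adj_def complete_adj_def)

lemma symp_kprod_adj: "symp kprod_adj"
  by (auto simp: symp_def dprod_adj_def complete_adj_def)

lemma ex_separating_codeword_kprod_iff:
  assumes "C \<subseteq> V" "(a, b) \<notin> C" "(x, y) \<in> V"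
  shows "(\<exists>c \<in> Iset V kprod_adj C (a, b). (x, y) \<notin> cnbhd V kprod_adj c) \<longleftrightarrow>
    (\<exists>k l. (k, l) \<in> C \<and> k \<noteq> a \<and> l \<noteq> b \<and> (x, y) \<noteq> (k, l) \<and> (x = k \<or> y = l))"
proof -
  have "(k, l) \<in> Iset V kprod_adj C (a, b) \<longleftrightarrow> (k, l) \<in> C \<and> k \<noteq> a \<and> l \<noteq> b" for k l
    using assms(1,2) by (auto simp: Iset_def mem_cnbhd_kprod)
  moreover have "(x, y) \<notin> cnbhd V kprod_adj (k, l) \<longleftrightarrow> (x, y) \<noteq> (k, l) \<and> (x = k \<or> y = l)" for k l
    using assms(3) by (auto simp: mem_cnbhd_kprod)
  ultimately show ?thesis
    by (simp add: Bex_def split_paired_Ex conj_assoc)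
qed

lemma is_SLD_kprod_iff:
  "is_SLD (kprod_verts n m) kprod_adj C \<longleftrightarrow> C \<subseteq> kprod_verts n m \<and> C \<noteq> {} \<and>
    (\<forall>a b x y. (a, b) \<in> kprod_verts n m - C \<longrightarrow> (x, y) \<in> kprod_verts n m \<longrightarrow> (x, y) \<noteq> (a, b) \<longrightarrow>
      (\<exists>k l. (k, l) \<in> C \<and> k \<noteq> a \<and> l \<noteq> b \<and> (x, y) \<noteq> (k, l) \<and> (x = k \<or> y = l)))"
  unfolding is_SLD_iff_separating[OF symp_kprod_adj] Ball_def split_paired_All
  by (intro conj_cong refl) (simp add: ex_separating_codeword_kprod_iff imp_conjL)

lemma two_per_column_card_le:
  assumes "finite C" "finite L" "\<forall>l \<in> L. \<exists>k k'. k \<noteq> k' \<and> (k, l) \<in> C \<and> (k', l) \<in> C"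
  shows "2 * card L \<le> card C"
proof -
  obtain f g where fg: "\<forall>l \<in> L. f l \<noteq> g l \<and> (f l, l) \<in> C \<and> (g l, l) \<in> C"
    using assms(3) by metis
  have "card ((\<lambda>l. (f l, l)) ` L) = card L" "card ((\<lambda>l. (g l, l)) ` L) = card L"
    by (simp_all add: card_image inj_on_def)
  moreover have "(\<lambda>l. (f l, l)) ` L \<inter> (\<lambda>l. (g l, l)) ` L = {}" using fg by auto
  ultimately have "card ((\<lambda>l. (f l, l)) ` L \<union> (\<lambda>l. (g l, l)) ` L) = 2 * card L"
    using assms(2) by (simp add: card_Un_disjoint)
  moreover have "(\<lambda>l. (f l, l)) ` L \<union> (\<lambda>l. (g l, l)) ` L \<subseteq> C" using fg by auto
  ultimately show ?thesis using card_mono[OF assms(1)] by metis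
qed

lemma full_row_card_le:
  assumes "finite C" "finite K" "finite L" "k \<in> K" "{k} \<times> L \<subseteq> C" "\<forall>k' \<in> K. \<exists>l. (k', l) \<in> C"
  shows "card L + card K - 1 \<le> card C"
proof -
  obtain h where h: "\<forall>k' \<in> K. (k', h k') \<in> C" using assms(6) by metis
  have "card ({k} \<times> L) = card L" by (simp add: card_cartesian_product)
  moreover have "card ((\<lambda>k'. (k', h k')) ` (K - {k})) = card K - 1"
    using assms(2,4) by (simp add: card_image inj_on_def)
  moreover have "{k} \<times> L \<inter> (\<lambda>k'. (k', h k')) ` (K - {k}) = {}" by auto
  moreover have "card K \<ge> 1" using assms(2,4) by (auto simp: Suc_le_eq card_gt_0_iff)
  ultimately have "card ({k} \<times> L \<union> (\<lambda>k'. (k', h k')) ` (K - {k})) = card L + card K - 1"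
    using assms(2,3) by (simp add: card_Un_disjoint)
  moreover have "{k} \<times> L \<union> (\<lambda>k'. (k', h k')) ` (K - {k}) \<subseteq> C" using assms(5) h by auto
  ultimately show ?thesis using card_mono[OF assms(1)] by metis
qed

context
  fixes n m :: nat and C :: "(nat \<times> nat) set"
  assumes SLD: "is_SLD (kprod_verts n m) kprod_adj C"
begin

lemma codewords_subset: "C \<subseteq> {1..n} \<times> {1..m}"
  using SLD by (simp add: is_SLD_def complete_verts_def)

lemma separating_codeword:
  assumes "(a, b) \<in> kprod_verts n m - C" "(x, y) \<in> kprod_verts n m" "(x, y) \<noteq> (a, b)"
  shows "\<exists>k l. (k, l) \<in> C \<and> k \<noteq> a \<and> l \<noteq> b \<and> (x, y) \<noteq> (k, l) \<and> (x = k \<or> y = l)"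
  using SLD assms unfolding is_SLD_kprod_iff by blast

lemma codeword_in_other_row:
  assumes "(a, b) \<in> kprod_verts n m - C" "k \<in> {1..n}" "k \<noteq> a"
  shows "\<exists>l. (k, l) \<in> C \<and> l \<noteq> b"
  using separating_codeword[of a b k b] assms by (auto simp: complete_verts_def)

lemma codeword_in_other_column:
  assumes "(a, b) \<in> kprod_verts n m - C" "l \<in> {1..m}" "l \<noteq> b"
  shows "\<exists>k. (k, l) \<in> C \<and> k \<noteq> a"
  using separating_codeword[of a b a l] assms by (auto simp: complete_verts_def)

lemma empty_row_forces_other_rows:
  assumes "k \<in> {1..n}" "\<forall>l. (k, l) \<notin> C"
  shows "({1..n} - {k}) \<times> {1..m} \<subseteq> C"
proof (rule subrelI)
  fix a b assume ab: "(a, b) \<in> ({1..n} - {k}) \<times> {1..m}"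
  show "(a, b) \<in> C"
  proof (rule ccontr)
    assume "(a, b) \<notin> C"
    with ab obtain l where "(k, l) \<in> C"
      using codeword_in_other_row[of a b k] assms(1) by (auto simp: complete_verts_def)
    with assms(2) show False by blast
  qed
qed

lemma empty_column_forces_other_columns:
  assumes "l \<in> {1..m}" "\<forall>k. (k, l) \<notin> C"
  shows "{1..n} \<times> ({1..m} - {l}) \<subseteq> C"
proof (rule subrelI)
  fix a b assume ab: "(a, b) \<in> {1..n} \<times> ({1..m} - {l})"
  show "(a, b) \<in> C"
  proof (rule ccontr)
    assume "(a, b) \<notin> C"
    with ab obtain k where "(k, l) \<in> C"
      using codeword_in_other_column[of a b l] assms(1) by (auto simp: complete_verts_def)
    with assms(2) show False by blast
  qed
qed

lemma lone_codeword_forces_row: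
  assumes "(k, l) \<in> C" "\<forall>k'. (k', l) \<in> C \<longrightarrow> k' = k"
  shows "{k} \<times> {1..m} \<subseteq> C"
proof (rule subrelI)
  fix k' l' assume kl': "(k', l') \<in> {k} \<times> {1..m}"
  show "(k', l') \<in> C"
  proof (rule ccontr)
    assume "(k', l') \<notin> C"
    moreover have "(k, l) \<in> kprod_verts n m"
      using assms(1) codewords_subset by (auto simp: complete_verts_def)
    ultimately have "(k, l') \<in> kprod_verts n m - C" "l \<in> {1..m}" "l \<noteq> l'"
      using kl' assms(1) by (auto simp: complete_verts_def)
    then obtain k'' where "(k'', l) \<in> C" "k'' \<noteq> k" using codeword_in_other_column by blast
    with assms(2) show False by blast
  qed
qed

lemma card_SLD_cases:
  "(n - 1) * m \<le> card C \<or> n * (m - 1) \<le> card C \<or> m + n - 1 \<le> card C \<or> 2 * m \<le> card C"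
proof -
  have fin: "finite C" using codewords_subset finite_subset by blast
  show ?thesis
  proof (cases "\<forall>l \<in> {1..m}. \<exists>k k'. k \<noteq> k' \<and> (k, l) \<in> C \<and> (k', l) \<in> C")
    case True
    then show ?thesis using two_per_column_card_le[OF fin _ True] by simp
  next
    case False
    then obtain l where l: "l \<in> {1..m}" "\<forall>k k'. (k, l) \<in> C \<longrightarrow> (k', l) \<in> C \<longrightarrow> k = k'"
      by blast
    show ?thesis
    proof (cases "\<exists>k. (k, l) \<in> C")
      case False
      then have "card ({1..n} \<times> ({1..m} - {l})) \<le> card C"
        using empty_column_forces_other_columns[OF l(1)] fin card_mono by blast
      then show ?thesis using l(1) by (simp add: card_cartesian_product)
    next
      case True
      then obtain k where k: "(k, l) \<in> C" by blast
      then have row: "{k} \<times> {1..m} \<subseteq> C" using l(2) lone_codeword_forces_row by blast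
      have "k \<in> {1..n}" using k codewords_subset by blast
      show ?thesis
      proof (cases "\<exists>k' \<in> {1..n}. \<forall>l. (k', l) \<notin> C")
        case True
        then obtain k' where "k' \<in> {1..n}" "\<forall>l. (k', l) \<notin> C" by blast
        then have "card (({1..n} - {k'}) \<times> {1..m}) \<le> card C"
          using empty_row_forces_other_rows fin card_mono by metis
        then show ?thesis using \<open>k' \<in> {1..n}\<close> by (simp add: card_cartesian_product)
      next
        case False
        then show ?thesis
          using full_row_card_le[OF fin _ _ \<open>k \<in> {1..n}\<close> row] by simp
      qed
    qed
  qed
qed

lemma card_SLD_lower_bound:
  assumes "2 \<le> n" "n \<le> m" "3 \<le> m"
  shows "(if n > 2 then m + n - 1 else m) \<le> card C"
proof -
  obtain i j where ij: "n = i + 2" "m = j + 3" using assms(1,3) le_Suc_ex by (metis add.commute)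
  have "m + n - 1 \<le> n * (m - 1)" unfolding ij by (simp add: algebra_simps)
  show ?thesis
  proof (cases "n > 2")
    case True
    then have "2 * m \<le> (n - 1) * m" by (intro mult_le_mono1) linarith
    with \<open>m + n - 1 \<le> n * (m - 1)\<close> True assms(2) show ?thesis
      using card_SLD_cases by (elim disjE; simp; linarith)
  next
    case False
    then have "n = 2" using assms(1) by simp
    with \<open>m + n - 1 \<le> n * (m - 1)\<close> show ?thesis
      using card_SLD_cases by (elim disjE; simp; linarith)
  qed
qed

end

lemma is_SLD_K2_K2:
  assumes "is_SLD (kprod_verts 2 2) kprod_adj C"
  shows "C = kprod_verts 2 2"
proof -
  have sub: "C \<subseteq> kprod_verts 2 2" using assms by (simp add: is_SLD_def)
  have "(a, b) \<in> C" if ab: "(a, b) \<in> kprod_verts 2 2" for a b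
  proof (rule ccontr)
    assume "(a, b) \<notin> C"
    moreover have ab12: "a \<in> {1, 2}" "b \<in> {1, 2}" using ab by (auto simp: complete_verts_def)
    then have "(3 - a, 3 - b) \<in> kprod_verts 2 2" "(3 - a, 3 - b) \<noteq> (a, b)"
      by (auto simp: complete_verts_def)
    ultimately obtain k l where kl: "(k, l) \<in> C" "k \<noteq> a" "l \<noteq> b" "(3 - a, 3 - b) \<noteq> (k, l)"
      using separating_codeword[OF assms] ab by blast
    then have "k \<in> {1, 2}" "l \<in> {1, 2}" using sub by (auto simp: complete_verts_def)
    with ab12 kl(2-4) show False by auto
  qed
  with sub show ?thesis by auto
qed

lemma exists_third_index:
  fixes b y :: nat
  assumes "3 \<le> m"
  shows "\<exists>l \<in> {1..m}. l \<noteq> b \<and> l \<noteq> y"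
proof -
  consider "b \<noteq> 1 \<and> y \<noteq> 1" | "b \<noteq> 2 \<and> y \<noteq> 2" | "b \<noteq> 3 \<and> y \<noteq> 3" by linarith
  then show ?thesis using assms by cases force+
qed

lemma first_row_separates:
  fixes C :: "(nat \<times> nat) set"
  assumes "3 \<le> m" "{1} \<times> {1..m} \<subseteq> C" "a \<noteq> 1" "y \<in> {1..m}" "x = 1 \<or> y \<noteq> b"
  shows "\<exists>k l. (k, l) \<in> C \<and> k \<noteq> a \<and> l \<noteq> b \<and> (x, y) \<noteq> (k, l) \<and> (x = k \<or> y = l)"
proof (cases "x = 1")
  case True
  obtain l where "l \<in> {1..m}" "l \<noteq> b" "l \<noteq> y" using exists_third_index[OF assms(1)] by blast
  with True assms(2,3) show ?thesis by blast
next
  case False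
  with assms(2-5) show ?thesis by blast
qed

lemma is_SLD_first_row:
  assumes "3 \<le> m"
  shows "is_SLD (kprod_verts 2 m) kprod_adj ({1} \<times> {1..m})"
  unfolding is_SLD_kprod_iff
proof (intro conjI allI impI)
  show "{1} \<times> {1..m} \<subseteq> kprod_verts 2 m" "{1} \<times> {1..m} \<noteq> {}"
    using assms by (auto simp: complete_verts_def)
  fix a b x y
  assume "(a, b) \<in> kprod_verts 2 m - {1} \<times> {1..m}" "(x, y) \<in> kprod_verts 2 m" "(x, y) \<noteq> (a, b)"
  then have "a = 2" "y \<in> {1..m}" "x = 1 \<or> y \<noteq> b" by (auto simp: complete_verts_def)
  then show "\<exists>k l. (k, l) \<in> {1} \<times> {1..m} \<and> k \<noteq> a \<and> l \<noteq> b \<and> (x, y) \<noteq> (k, l) \<and> (x = k \<or> y = l)"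
    by (intro first_row_separates[OF assms subset_refl]) simp_all
qed

lemma is_SLD_first_row_column:
  assumes "3 \<le> m" "1 \<le> n"
  shows "is_SLD (kprod_verts n m) kprod_adj ({1} \<times> {1..m} \<union> {1..n} \<times> {1})"
  unfolding is_SLD_kprod_iff
proof (intro conjI allI impI)
  let ?C = "{1} \<times> {1..m} \<union> {1..n} \<times> {1::nat}"
  show "?C \<subseteq> kprod_verts n m" "?C \<noteq> {}"
    using assms by (auto simp: complete_verts_def)
  fix a b x y
  assume "(a, b) \<in> kprod_verts n m - ?C" "(x, y) \<in> kprod_verts n m" "(x, y) \<noteq> (a, b)"
  then have ab: "a \<noteq> 1" "b \<noteq> 1" and xy: "x \<in> {1..n}" "y \<in> {1..m}" "x \<noteq> a \<or> y \<noteq> b"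
    by (auto simp: complete_verts_def)
  show "\<exists>k l. (k, l) \<in> ?C \<and> k \<noteq> a \<and> l \<noteq> b \<and> (x, y) \<noteq> (k, l) \<and> (x = k \<or> y = l)"
  proof (cases "x = 1 \<or> y \<noteq> b")
    case True
    then show ?thesis using first_row_separates[OF assms(1) _ ab(1) xy(2), of ?C] by blast
  next
    case False
    then have "(x, 1) \<in> ?C" "x \<noteq> a" "(x, y) \<noteq> (x, 1)" using ab xy by auto
    then show ?thesis using ab(2) by blast
  qed
qed

lemma card_first_row_column:
  assumes "1 \<le> n" "1 \<le> m"
  shows "card ({1} \<times> {1..m} \<union> {1..n} \<times> {1::nat}) = m + n - 1"
proof -
  have "{1} \<times> {1..m} \<union> {1..n} \<times> {1::nat} = {1} \<times> {1..m} \<union> {2..n} \<times> {1}"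
    using assms by auto
  moreover have "{1} \<times> {1..m} \<inter> {2..n} \<times> {1::nat} = {}" by auto
  ultimately show ?thesis using assms by (simp add: card_Un_disjoint card_cartesian_product)
qed

lemma gamma_SLD_kprod_wide:
  assumes "3 \<le> n" "n \<le> m"
  shows "gamma_SLD (kprod_verts n m) kprod_adj = m + n - 1"
proof (rule gamma_SLD_eqI)
  show "is_SLD (kprod_verts n m) kprod_adj ({1} \<times> {1..m} \<union> {1..n} \<times> {1})"
    using assms by (intro is_SLD_first_row_column) auto
  show "card ({1} \<times> {1..m} \<union> {1..n} \<times> {1}) = m + n - 1"
    using assms by (intro card_first_row_column) auto
  show "m + n - 1 \<le> card C" if "is_SLD (kprod_verts n m) kprod_adj C" for C
    using card_SLD_lower_bound[OF that] assms by simp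
qed (simp add: complete_verts_def)

lemma gamma_SLD_K2_thin:
  assumes "3 \<le> m"
  shows "gamma_SLD (kprod_verts 2 m) kprod_adj = m"
proof (rule gamma_SLD_eqI[OF _ is_SLD_first_row[OF assms]])
  show "m \<le> card C" if "is_SLD (kprod_verts 2 m) kprod_adj C" for C
    using card_SLD_lower_bound[OF that] assms by simp
qed (simp_all add: complete_verts_def card_cartesian_product)

lemma gamma_SLD_K2_K2: "gamma_SLD (kprod_verts 2 2) kprod_adj = 4"
proof (rule gamma_SLD_eqI[OF _ is_SLD_whole])
  show "4 \<le> card C" if "is_SLD (kprod_verts 2 2) kprod_adj C" for C
    using is_SLD_K2_K2[OF that] by (simp add: complete_verts_def card_cartesian_product)
qed (simp_all add: complete_verts_def card_cartesian_product)

theorem theorem19: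
  fixes m n :: nat
  assumes "2 \<le> n" and "n \<le> m"
  shows "gamma_SLD (complete_verts n \<times> complete_verts m) (dprod_adj complete_adj complete_adj)
    = (if n > 2 then m + n - 1 else if m > 2 then m else 4)"
proof -
  consider "n > 2" | "n = 2" "m > 2" | "n = 2" "m = 2"
    using assms by linarith
  then show ?thesis
  proof cases
    case 1
    then show ?thesis using gamma_SLD_kprod_wide assms(2) by simp
  next
    case 2
    then show ?thesis using gamma_SLD_K2_thin by simp
  next
    case 3
    then show ?thesis using gamma_SLD_K2_K2 by simp
  qed
qed

end
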